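(* Let $\gamma$ be a non-collision orbit of the regularized planar two-center problem lying on a regular torus of type L or type S with rotation number $W$, and let $n=\lfloor W\rfloor$. Then in the syzygy sequence of $\gamma$, every maximal block of consecutive symbols 3 lying between two symbols from $\{1,2\}$ has length either $n$ or $n+1$.
   Context: Fix $d>0$ and masses $m_1,m_2>0$ at $(-d,0)$ and $(d,0)$. A test particle moves with Hamiltonian $H=\tfrac12(p_x^2+p_y^2)-m_1/\sqrt{(x+d)^2+y^2}-m_2/\sqrt{(x-d)^2+y^2}$; energies $h<0$. Regularization: $(\lambda,\nu)\in\mathbb{R}\times(\mathbb{R}/2\pi\mathbb{Z})$ with $x+iy=d\sin(\nu+i\lambda)$, i.e. $(x,y)=(d\cosh\lambda\sin\nu,\ d\sinh\lambda\cos\nu)$, conjugate momenta $p_\lambda,p_\nu$, time change $dt=d^2(\cosh^2\lambda-\sin^2\nu)\,d\tau$. On $H=h$ the motion becomes the flow (time $\tau$) of $H_\lambda+H_\nu$ on its zero level, $H_\lambda=\tfrac12p_\lambda^2-d(m_1+m_2)\cosh\lambda-hd^2\cosh^2\lambda$, $H_\nu=\tfrac12p_\nu^2+d(m_1-m_2)\sin\nu+hd^2\sin^2\nu$; orbits lie in sets $\{H_\lambda=-g,\ H_\nu=g\}$ for a separation constant $g$. Regular torus: a compact connected component $\mathbb{T}=C_\lambda\times C_\nu$ of such a set with $-g$ a regular value of $H_\lambda$ and $g$ a regular value of $H_\nu$ ($C_\lambda$ a closed curve in the $(\lambda,p_\lambda)$-plane, $C_\nu$ a closed curve in the cylinder $(\mathbb{R}/2\pi\mathbb{Z})\times\mathbb{R}$).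 Type S: $C_\nu$ contractible in the cylinder; type L: $C_\nu$ winds around the cylinder and $C_\lambda$ meets $\{\lambda=0\}$. Rotation number $W=T_\nu/T_\lambda$, where $T_\lambda,T_\nu$ are the $\tau$-periods of the motions on $C_\lambda$, $C_\nu$. Syzygy symbols: 3 when $\lambda=0$, $\nu\not\equiv\pm\pi/2$; 1 when $\nu\equiv-\pi/2$, $\lambda\ne0$; 2 when $\nu\equiv\pi/2$, $\lambda\ne0$ (the crossings of the particle with the $x$-axis between the centers, on $x<-d$, on $x>d$). Collision points: $\lambda=0$, $\nu\equiv\pm\pi/2$. A non-collision orbit is an orbit of the regularized flow on a regular torus with no collision point; its syzygy sequence is the bi-infinite sequence of symbols in time order. *)

theory Defs
  imports "HOL-Analysis.Analysis"
begin

text \<open>Phase coordinates: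
  (lambda, p_lambda) in the plane R x R; (nu, p_nu) with nu lifted to R,
  the cylinder (R/2piZ) x R being realised as the subset range cyl of R^3.\<close>

definition Hlam :: "real \<Rightarrow> real \<Rightarrow> real \<Rightarrow> real \<Rightarrow> real \<times> real \<Rightarrow> real" where
  "Hlam d m1 m2 h z = (case z of (l, p) \<Rightarrow>
      p\<^sup>2 / 2 - d * (m1 + m2) * cosh l - h * d\<^sup>2 * (cosh l)\<^sup>2)"

definition Hnu :: "real \<Rightarrow> real \<Rightarrow> real \<Rightarrow> real \<Rightarrow> real \<times> real \<Rightarrow> real" where
  "Hnu d m1 m2 h z = (case z of (v, p) \<Rightarrow>
      p\<^sup>2 / 2 + d * (m1 - m2) * sin v + h * d\<^sup>2 * (sin v)\<^sup>2)"

definition cyl :: "real \<times> real \<Rightarrow> real \<times> real \<times> real" where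
  "cyl z = (case z of (v, p) \<Rightarrow> (cos v, sin v, p))"

definition Cylinder :: "(real \<times> real \<times> real) set" where
  "Cylinder = range cyl"

definition regular_value :: "(real \<times> real \<Rightarrow> real) \<Rightarrow> real \<Rightarrow> bool" where
  "regular_value f c \<longleftrightarrow>
     (\<forall>x. f x = c \<longrightarrow> (\<exists>D. (f has_derivative D) (at x) \<and> D \<noteq> (\<lambda>_. 0)))"

definition Clam :: "real \<Rightarrow> real \<Rightarrow> real \<Rightarrow> real \<Rightarrow> real \<Rightarrow> real \<times> real \<Rightarrow> (real \<times> real) set" where
  "Clam d m1 m2 h g z = connected_component_set {x. Hlam d m1 m2 h x = - g} z"

definition Cnu :: "real \<Rightarrow> real \<Rightarrow> real \<Rightarrow> real \<Rightarrow> real \<Rightarrow> real \<times> real \<Rightarrow> (real \<times> real \<times> real) set" where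
  "Cnu d m1 m2 h g w = connected_component_set (cyl ` {x. Hnu d m1 m2 h x = g}) (cyl w)"

definition regular_torus :: "real \<Rightarrow> real \<Rightarrow> real \<Rightarrow> real \<Rightarrow> real \<Rightarrow> real \<times> real \<Rightarrow> real \<times> real \<Rightarrow> bool" where
  "regular_torus d m1 m2 h g z w \<longleftrightarrow>
     Hlam d m1 m2 h z = - g \<and> Hnu d m1 m2 h w = g \<and>
     compact (Clam d m1 m2 h g z \<times> Cnu d m1 m2 h g w) \<and>
     regular_value (Hlam d m1 m2 h) (- g) \<and> regular_value (Hnu d m1 m2 h) g"

definition contractible_in_cylinder :: "(real \<times> real \<times> real) set \<Rightarrow> bool" where
  "contractible_in_cylinder C \<longleftrightarrow>
     (\<exists>c. homotopic_with_canon (\<lambda>_. True) C Cylinder id (\<lambda>_. c))"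

definition torus_type_S :: "real \<Rightarrow> real \<Rightarrow> real \<Rightarrow> real \<Rightarrow> real \<Rightarrow> real \<times> real \<Rightarrow> real \<times> real \<Rightarrow> bool" where
  "torus_type_S d m1 m2 h g z w \<longleftrightarrow> contractible_in_cylinder (Cnu d m1 m2 h g w)"

definition torus_type_L :: "real \<Rightarrow> real \<Rightarrow> real \<Rightarrow> real \<Rightarrow> real \<Rightarrow> real \<times> real \<Rightarrow> real \<times> real \<Rightarrow> bool" where
  "torus_type_L d m1 m2 h g z w \<longleftrightarrow>
     \<not> contractible_in_cylinder (Cnu d m1 m2 h g w) \<and> (\<exists>p. (0, p) \<in> Clam d m1 m2 h g z)"

text \<open>Orbit (time tau) of the Hamiltonian flow of H_lambda + H_nu, nu lifted to R.\<close>
definition regularized_orbit ::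
  "real \<Rightarrow> real \<Rightarrow> real \<Rightarrow> real \<Rightarrow> (real \<Rightarrow> real) \<Rightarrow> (real \<Rightarrow> real) \<Rightarrow> (real \<Rightarrow> real) \<Rightarrow> (real \<Rightarrow> real) \<Rightarrow> bool" where
  "regularized_orbit d m1 m2 h lam plam nu pnu \<longleftrightarrow>
     (\<forall>t. (lam has_real_derivative plam t) (at t) \<and>
          (plam has_real_derivative
             (d * (m1 + m2) * sinh (lam t) + 2 * h * d\<^sup>2 * cosh (lam t) * sinh (lam t))) (at t) \<and>
          (nu has_real_derivative pnu t) (at t) \<and>
          (pnu has_real_derivative
             (- (d * (m1 - m2) * cos (nu t) + 2 * h * d\<^sup>2 * sin (nu t) * cos (nu t)))) (at t))"

definition Tlam :: "(real \<Rightarrow> real) \<Rightarrow> (real \<Rightarrow> real) \<Rightarrow> real" where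
  "Tlam lam plam = Inf {T. T > 0 \<and> (\<forall>t. lam (t + T) = lam t \<and> plam (t + T) = plam t)}"

definition Tnu :: "(real \<Rightarrow> real) \<Rightarrow> (real \<Rightarrow> real) \<Rightarrow> real" where
  "Tnu nu pnu = Inf {T. T > 0 \<and> (\<forall>t. cyl (nu (t + T), pnu (t + T)) = cyl (nu t, pnu t))}"

definition rotation_number :: "(real \<Rightarrow> real) \<Rightarrow> (real \<Rightarrow> real) \<Rightarrow> (real \<Rightarrow> real) \<Rightarrow> (real \<Rightarrow> real) \<Rightarrow> real" where
  "rotation_number lam plam nu pnu = Tnu nu pnu / Tlam lam plam"

text \<open>Collision points: lambda = 0 and nu = +-pi/2 mod 2pi (i.e. cos nu = 0).\<close>
definition non_collision :: "(real \<Rightarrow> real) \<Rightarrow> (real \<Rightarrow> real) \<Rightarrow> bool" where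
  "non_collision lam nu \<longleftrightarrow> (\<forall>t. \<not> (lam t = 0 \<and> cos (nu t) = 0))"

text \<open>Syzygy symbol at time t (None if no syzygy at t).
  nu = -pi/2 mod 2pi iff sin nu = -1; nu = pi/2 mod 2pi iff sin nu = 1.\<close>
definition syzygy :: "(real \<Rightarrow> real) \<Rightarrow> (real \<Rightarrow> real) \<Rightarrow> real \<Rightarrow> nat option" where
  "syzygy lam nu t =
     (if lam t = 0 \<and> cos (nu t) \<noteq> 0 then Some 3
      else if lam t \<noteq> 0 \<and> sin (nu t) = -1 then Some 1
      else if lam t \<noteq> 0 \<and> sin (nu t) = 1 then Some 2
      else None)"

end

theory Submission
  imports Defs
begin

text \<open>Both separated motions are Newtonian, \<open>x'' = F x\<close>, and inherit symmetries from
  their forces: the \<open>\<lambda>\<close>-force is odd and the \<open>\<nu>\<close>-force is antisymmetric about every zero of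
  \<open>cos\<close>. By uniqueness of solutions, the trajectory is then symmetric under reflection in time
  about each of its zeros, so the zeros of \<open>\<lambda>\<close> (energy conservation and \<open>h < 0\<close> make this a
  bounded oscillation on a regular level, hence it keeps returning to \<open>0\<close>) form a progression
  \<open>s\<^sub>0 + \<delta>\<int>\<close> with \<open>T\<^sub>\<lambda> = 2\<delta>\<close>, while two consecutive zeros \<open>t\<^sub>1 < t\<^sub>2\<close> of \<open>cos \<nu>\<close>
  (consecutive symbols 1 or 2) give \<open>T\<^sub>\<nu> = 2 (t\<^sub>2 - t\<^sub>1)\<close>. So \<open>W = (t\<^sub>2 - t\<^sub>1) / \<delta>\<close>, and the
  symbols 3 in between are the points of \<open>s\<^sub>0 + \<delta>\<int>\<close> in \<open>(t\<^sub>1, t\<^sub>2)\<close>: there are \<open>\<lfloor>W\<rfloor>\<close> or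
  \<open>\<lfloor>W\<rfloor> + 1\<close> of them.\<close>

section \<open>Newton's equation: uniqueness, symmetries, energy\<close>

definition solves_newton :: "(real \<Rightarrow> real) \<Rightarrow> (real \<Rightarrow> real) \<Rightarrow> (real \<Rightarrow> real) \<Rightarrow> bool" where
  "solves_newton F x p \<longleftrightarrow>
     (\<forall>t. (x has_real_derivative p t) (at t) \<and> (p has_real_derivative F (x t)) (at t))"

lemma solves_newtonD:
  assumes "solves_newton F x p"
  shows "(x has_real_derivative p t) (at t)" "(p has_real_derivative F (x t)) (at t)"
  using assms unfolding solves_newton_def by auto

lemma solves_newton_continuous:
  assumes "solves_newton F x p"
  shows "continuous_on S x" "continuous_on S p"
  using solves_newtonD[OF assms]
  by (meson DERIV_continuous continuous_at_imp_continuous_on)+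

lemma deriv_bounded_by_self_imp_zero:
  fixes u u' :: "real \<Rightarrow> real"
  assumes du: "\<And>t. (u has_real_derivative u' t) (at t)"
    and bound: "\<And>t. \<bar>u' t\<bar> \<le> C * u t" and nonneg: "\<And>t. u t \<ge> 0"
    and "u t0 = 0"
  shows "u t = 0"
proof -
  have "u t * exp (- C * t) \<le> 0" if "t0 \<le> t" for t
  proof -
    have "u t * exp (- C * t) \<le> u t0 * exp (- C * t0)"
    proof (rule DERIV_nonpos_imp_nonincreasing[OF that])
      fix s
      have "((\<lambda>s. u s * exp (- C * s)) has_real_derivative (u' s - C * u s) * exp (- C * s)) (at s)"
        by (rule derivative_eq_intros du refl | simp)+ (simp add: algebra_simps)
      moreover have "(u' s - C * u s) * exp (- C * s) \<le> 0"
        using abs_le_D1[OF bound[of s]] by (simp add: mult_nonpos_nonneg)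
      ultimately show "\<exists>y. ((\<lambda>s. u s * exp (- C * s)) has_real_derivative y) (at s) \<and> y \<le> 0"
        by blast
    qed
    with \<open>u t0 = 0\<close> show ?thesis by simp
  qed
  moreover have "u t * exp (C * t) \<le> 0" if "t \<le> t0" for t
  proof -
    have "u t * exp (C * t) \<le> u t0 * exp (C * t0)"
    proof (rule DERIV_nonneg_imp_nondecreasing[OF that])
      fix s
      have "((\<lambda>s. u s * exp (C * s)) has_real_derivative (u' s + C * u s) * exp (C * s)) (at s)"
        by (rule derivative_eq_intros du refl | simp)+ (simp add: algebra_simps)
      moreover have "(u' s + C * u s) * exp (C * s) \<ge> 0"
        using abs_le_D2[OF bound[of s]] by simp
      ultimately show "\<exists>y. ((\<lambda>s. u s * exp (C * s)) has_real_derivative y) (at s) \<and> y \<ge> 0"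
        by blast
    qed
    with \<open>u t0 = 0\<close> show ?thesis by simp
  qed
  ultimately show ?thesis
    using nonneg[of t] by (cases "t0 \<le> t") (auto simp: mult_le_0_iff intro: order.antisym)
qed

text \<open>The squared phase-space distance of two solutions grows at most exponentially (Gronwall).\<close>
lemma solves_newton_unique:
  assumes a: "solves_newton F xa pa" and b: "solves_newton F xb pb"
    and lip: "K-lipschitz_on S F" and "range xa \<subseteq> S" "range xb \<subseteq> S"
    and "xa t0 = xb t0" "pa t0 = pb t0"
  shows "xa t = xb t \<and> pa t = pb t"
proof -
  define u where "u t = (xa t - xb t)\<^sup>2 + (pa t - pb t)\<^sup>2" for t
  define u' where
    "u' t = 2 * (xa t - xb t) * (pa t - pb t) + 2 * (pa t - pb t) * (F (xa t) - F (xb t))" for t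
  have du: "(u has_real_derivative u' t) (at t)" for t
    unfolding u_def u'_def
    by (rule derivative_eq_intros solves_newtonD[OF a] solves_newtonD[OF b] refl | simp)+
       (simp add: algebra_simps)
  have "\<bar>u' t\<bar> \<le> (1 + K) * u t" for t
  proof -
    define a b where "a = xa t - xb t" and "b = pa t - pb t"
    have ab: "\<bar>2 * a * b\<bar> \<le> a\<^sup>2 + b\<^sup>2"
      using sum_squares_bound[of a b] sum_squares_bound[of a "- b"] by (simp add: abs_if)
    have "\<bar>F (xa t) - F (xb t)\<bar> \<le> K * \<bar>a\<bar>"
      using lipschitz_onD[OF lip] \<open>range xa \<subseteq> S\<close> \<open>range xb \<subseteq> S\<close> by (force simp: a_def dist_real_def)
    then have "\<bar>2 * b * (F (xa t) - F (xb t))\<bar> \<le> 2 * \<bar>b\<bar> * (K * \<bar>a\<bar>)"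
      by (simp add: abs_mult mult_left_mono)
    also have "\<dots> = K * \<bar>2 * a * b\<bar>"
      by (simp add: abs_mult)
    also have "\<dots> \<le> K * (a\<^sup>2 + b\<^sup>2)"
      using ab lipschitz_on_nonneg[OF lip] by (rule mult_left_mono)
    finally show ?thesis
      using ab abs_triangle_ineq[of "2 * a * b" "2 * b * (F (xa t) - F (xb t))"]
      by (simp add: u_def u'_def a_def b_def algebra_simps)
  qed
  then have "u t = 0"
    by (rule deriv_bounded_by_self_imp_zero[OF du]) (use assms in \<open>simp_all add: u_def\<close>)
  then show ?thesis by (simp add: u_def sum_power2_eq_zero_iff)
qed

lemma has_real_derivative_reflect:
  assumes "(f has_real_derivative D) (at (c - t))"
  shows "((\<lambda>s. f (c - s)) has_real_derivative - D) (at t)"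
proof -
  have "((\<lambda>s. c - s) has_real_derivative -1) (at t)"
    by (auto intro!: derivative_eq_intros)
  from DERIV_chain2[of f D "\<lambda>s. c - s", OF _ this] assms show ?thesis
    by simp
qed

lemma solves_newton_time_reversal:
  assumes "solves_newton F x p"
  shows "solves_newton F (\<lambda>t. x (c - t)) (\<lambda>t. - p (c - t))"
  unfolding solves_newton_def
  using has_real_derivative_reflect[OF solves_newtonD(1)[OF assms]]
    has_real_derivative_reflect[OF solves_newtonD(2)[OF assms]]
  by (auto intro: DERIV_minus[where D = "- _", simplified])

lemma solves_newton_point_reflection:
  assumes "solves_newton F x p" and odd: "\<And>y. F (2 * a - y) = - F y"
  shows "solves_newton F (\<lambda>t. 2 * a - x (c - t)) (\<lambda>t. p (c - t))"
  unfolding solves_newton_def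
  using has_real_derivative_reflect[OF solves_newtonD(1)[OF assms(1)]]
    has_real_derivative_reflect[OF solves_newtonD(2)[OF assms(1)]]
  by (auto intro!: derivative_eq_intros simp: odd)

lemma solves_newton_turning_point_symmetry:
  assumes sol: "solves_newton F x p" and lip: "K-lipschitz_on S F" and "range x \<subseteq> S"
    and "p r = 0"
  shows "x (2 * r - t) = x t \<and> p (2 * r - t) = - p t"
proof -
  have "range (\<lambda>t. x (2 * r - t)) \<subseteq> S"
    using assms(3) by auto
  then show ?thesis
    using solves_newton_unique[OF solves_newton_time_reversal[OF sol, of "2 * r"] sol lip, of r t]
      assms(3,4) by auto
qed

lemma solves_newton_center_symmetry:
  assumes sol: "solves_newton F x p" and lip: "K-lipschitz_on S F" and S: "range x \<subseteq> S"
    and refl_S: "\<And>y. y \<in> S \<Longrightarrow> 2 * a - y \<in> S" and odd: "\<And>y. F (2 * a - y) = - F y"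
    and "x z = a"
  shows "x (2 * z - t) = 2 * a - x t \<and> p (2 * z - t) = p t"
proof -
  have "range (\<lambda>t. 2 * a - x (2 * z - t)) \<subseteq> S"
    using S refl_S by auto
  then show ?thesis
    using solves_newton_unique[OF solves_newton_point_reflection[OF sol odd, of "2 * z"] sol lip, of z t]
      S \<open>x z = a\<close> by auto
qed

lemma solves_newton_energy_conserved:
  assumes sol: "solves_newton F x p" and dV: "\<And>y. (V has_real_derivative - F y) (at y)"
  shows "(p t)\<^sup>2 / 2 + V (x t) = (p s)\<^sup>2 / 2 + V (x s)"
proof -
  have "((\<lambda>t. (p t)\<^sup>2 / 2 + V (x t)) has_real_derivative 0) (at t)" for t
    by (rule derivative_eq_intros solves_newtonD[OF sol] DERIV_chain2[OF dV] refl | simp)+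
  then show ?thesis
    using DERIV_isconst_all[of "\<lambda>t. (p t)\<^sup>2 / 2 + V (x t)" t s] by blast
qed

lemma eventually_deriv_ge_imp_filterlim_at_top:
  fixes f f' :: "real \<Rightarrow> real"
  assumes ev: "eventually (\<lambda>t. (f has_real_derivative f' t) (at t) \<and> c \<le> f' t) at_top"
    and "c > 0"
  shows "filterlim f at_top at_top"
proof -
  obtain T where T: "\<And>t. t \<ge> T \<Longrightarrow> (f has_real_derivative f' t) (at t) \<and> c \<le> f' t"
    using ev by (auto simp: eventually_at_top_linorder)
  have linear: "f T + c * (t - T) \<le> f t" if "T \<le> t" for t
  proof -
    have "f T - c * T \<le> f t - c * t"
    proof (rule DERIV_nonneg_imp_nondecreasing[OF that])
      fix s assume "T \<le> s"
      then show "\<exists>y. ((\<lambda>t. f t - c * t) has_real_derivative y) (at s) \<and> 0 \<le> y"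
        using T[of s] by (intro exI[of _ "f' s - c"]) (auto intro!: derivative_eq_intros)
    qed
    then show ?thesis by (simp add: algebra_simps)
  qed
  show ?thesis
  proof (subst filterlim_at_top, intro allI)
    fix Z
    have "Z \<le> f t" if "t \<ge> max T (T + (Z - f T) / c)" for t
    proof -
      have "Z - f T \<le> c * (t - T)"
        using that \<open>c > 0\<close> by (simp add: field_simps)
      then show ?thesis using linear[of t] that by simp
    qed
    then show "eventually (\<lambda>t. Z \<le> f t) at_top"
      unfolding eventually_at_top_linorder by (intro exI[of _ "max T (T + (Z - f T) / c)"]) auto
  qed
qed

lemma mono_on_bdd_above_tendsto_at_top:
  fixes f :: "real \<Rightarrow> real"
  assumes "mono_on {s..} f" and "\<And>t. f t \<le> M"
  shows "(f \<longlongrightarrow> (SUP t\<in>{s..}. f t)) at_top"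
proof (rule increasing_tendsto)
  have bdd: "bdd_above (f ` {s..})"
    using assms(2) by (intro bdd_aboveI2)
  show "eventually (\<lambda>t. f t \<le> (SUP t\<in>{s..}. f t)) at_top"
    using bdd by (auto simp: eventually_at_top_linorder intro!: exI[of _ s] cSUP_upper)
  fix y assume "y < (SUP t\<in>{s..}. f t)"
  then obtain t0 where "t0 \<ge> s" "y < f t0"
    using less_cSUP_iff[OF _ bdd] by auto
  then show "eventually (\<lambda>t. y < f t) at_top"
    using assms(1) by (auto simp: eventually_at_top_linorder mono_on_def intro!: exI[of _ t0]
        intro: less_le_trans)
qed

lemma not_filterlim_at_top_if_eventually_bounded:
  fixes f :: "real \<Rightarrow> real"
  assumes "eventually (\<lambda>t. f t \<le> B) at_top"
  shows "\<not> filterlim f at_top at_top"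
proof
  assume "filterlim f at_top at_top"
  then have "eventually (\<lambda>t. B + 1 \<le> f t) at_top"
    by (simp add: filterlim_at_top)
  with assms have "eventually (\<lambda>t. f t \<le> B \<and> B + 1 \<le> f t) at_top"
    by (rule eventually_conj)
  then show False
    by (auto simp: eventually_at_top_linorder)
qed

lemma solves_newton_limit_force_zero:
  assumes sol: "solves_newton F x p" and x_lim: "(x \<longlongrightarrow> L) at_top" and "isCont F L"
    and p_le: "\<And>t. p t \<le> P" and p_pos: "eventually (\<lambda>t. p t > 0) at_top"
  shows "F L = 0"
proof -
  have F_lim: "((\<lambda>t. F (x t)) \<longlongrightarrow> F L) at_top"
    using isCont_tendsto_compose[OF \<open>isCont F L\<close> x_lim] .
  have False if "F L > 0"
  proof -
    have "eventually (\<lambda>t. F L / 2 < F (x t)) at_top"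
      using order_tendstoD(1)[OF F_lim, of "F L / 2"] that by simp
    then have "eventually (\<lambda>t. (p has_real_derivative F (x t)) (at t) \<and> F L / 2 \<le> F (x t)) at_top"
      by (rule eventually_mono) (simp add: solves_newtonD(2)[OF sol])
    then have "filterlim p at_top at_top"
      by (rule eventually_deriv_ge_imp_filterlim_at_top) (use that in simp)
    then show False
      using not_filterlim_at_top_if_eventually_bounded[of p P] p_le by simp
  qed
  moreover have False if "F L < 0"
  proof -
    have "eventually (\<lambda>t. F (x t) < F L / 2) at_top"
      using order_tendstoD(2)[OF F_lim, of "F L / 2"] that by simp
    then have "eventually (\<lambda>t. ((\<lambda>t. - p t) has_real_derivative - F (x t)) (at t) \<and>
        - F L / 2 \<le> - F (x t)) at_top"
      by (rule eventually_mono) (simp add: DERIV_minus solves_newtonD(2)[OF sol])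
    then have "filterlim (\<lambda>t. - p t) at_top at_top"
      by (rule eventually_deriv_ge_imp_filterlim_at_top) (use that in simp)
    moreover have "eventually (\<lambda>t. - p t \<le> 0) at_top"
      using p_pos by (rule eventually_mono) simp
    ultimately show False
      using not_filterlim_at_top_if_eventually_bounded[of "\<lambda>t. - p t" 0] by simp
  qed
  ultimately show ?thesis
    by fastforce
qed

lemma solves_newton_limit_potential_eq_energy:
  assumes sol: "solves_newton F x p" and x_lim: "(x \<longlongrightarrow> L) at_top" and "isCont V L"
    and energy: "\<And>t. (p t)\<^sup>2 / 2 + V (x t) = E"
    and x_le: "\<And>t. x t \<le> M" and p_pos: "eventually (\<lambda>t. p t > 0) at_top"
  shows "V L = E"
proof (rule ccontr)
  assume "V L \<noteq> E"
  have "(\<lambda>t. (p t)\<^sup>2 / 2) = (\<lambda>t. E - V (x t))"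
    using energy by (simp add: fun_eq_iff eq_diff_eq)
  then have kinetic_lim: "((\<lambda>t. (p t)\<^sup>2 / 2) \<longlongrightarrow> E - V L) at_top"
    using tendsto_diff[OF tendsto_const isCont_tendsto_compose[OF \<open>isCont V L\<close> x_lim], of E] by simp
  then have "E - V L \<ge> 0"
    by (rule tendsto_lowerbound) (simp_all add: always_eventually)
  with \<open>V L \<noteq> E\<close> have "E - V L > 0"
    by simp
  define c where "c = sqrt (E - V L)"
  have c_gt: "c > 0" and c_sq: "c\<^sup>2 = E - V L" and half: "(E - V L) / 2 < E - V L"
    using \<open>E - V L > 0\<close> by (simp_all add: c_def)
  have "eventually (\<lambda>t. c \<le> p t) at_top"
    using order_tendstoD(1)[OF kinetic_lim half] p_pos
  proof eventually_elim
    case (elim t)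
    then have "c\<^sup>2 \<le> (p t)\<^sup>2"
      by (simp add: c_sq)
    then show ?case
      using power2_le_imp_le[of c "p t"] elim(2) by simp
  qed
  then have "eventually (\<lambda>t. (x has_real_derivative p t) (at t) \<and> c \<le> p t) at_top"
    by (rule eventually_mono) (simp add: solves_newtonD(1)[OF sol])
  then have "filterlim x at_top at_top"
    using c_gt by (rule eventually_deriv_ge_imp_filterlim_at_top)
  then show False
    using not_filterlim_at_top_if_eventually_bounded[of x M] x_le by simp
qed

text \<open>A bounded motion on a regular energy level cannot keep moving in one direction: it would
  converge to a point where both the force and the momentum vanish.\<close>
lemma solves_newton_bounded_turns:
  assumes sol: "solves_newton F x p"
    and energy: "\<And>t. (p t)\<^sup>2 / 2 + V (x t) = E"
    and x_le: "\<And>t. x t \<le> M" and p_le: "\<And>t. p t \<le> P"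
    and cont: "\<And>y. isCont F y" "\<And>y. isCont V y"
    and regular: "\<And>y. V y = E \<Longrightarrow> F y \<noteq> 0"
    and "p s0 > 0"
  shows "\<exists>r>s0. p r = 0"
proof (rule ccontr)
  assume no_turn: "\<not> (\<exists>r>s0. p r = 0)"
  have p_pos: "p t > 0" if t: "t \<ge> s0" for t
  proof (rule ccontr)
    assume "\<not> p t > 0"
    then obtain r where "s0 \<le> r" "r \<le> t" "p r = 0"
      using IVT2'[of p t 0 s0] t solves_newton_continuous(2)[OF sol] \<open>p s0 > 0\<close> by auto
    with no_turn \<open>p s0 > 0\<close> show False
      by (cases "r = s0") auto
  qed
  then have ev_p_pos: "eventually (\<lambda>t. p t > 0) at_top"
    unfolding eventually_at_top_linorder by blast
  have "mono_on {s0..} x"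
  proof (rule mono_onI)
    fix a b assume "a \<in> {s0..}" "b \<in> {s0..}" "a \<le> b"
    then have "\<exists>y. (x has_real_derivative y) (at t) \<and> 0 \<le> y" if "a \<le> t" for t
      using solves_newtonD(1)[OF sol, of t] p_pos[of t] that
      by (intro exI[of _ "p t"]) auto
    then show "x a \<le> x b"
      by (rule DERIV_nonneg_imp_nondecreasing[OF \<open>a \<le> b\<close>]) simp
  qed
  then obtain L where x_lim: "(x \<longlongrightarrow> L) at_top"
    using mono_on_bdd_above_tendsto_at_top x_le by blast
  have "F L = 0"
    using solves_newton_limit_force_zero[OF sol x_lim cont(1) p_le ev_p_pos] .
  moreover have "V L = E"
    using solves_newton_limit_potential_eq_energy[OF sol x_lim cont(2) energy x_le ev_p_pos] .
  ultimately show False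
    using regular by blast
qed

section \<open>Lipschitz bounds, zeros and periods of real functions\<close>

lemma bounded_deriv_imp_lipschitz_on:
  fixes f f' :: "real \<Rightarrow> real"
  assumes "\<And>x. (f has_real_derivative f' x) (at x)" "convex S"
    and "\<And>x. x \<in> S \<Longrightarrow> \<bar>f' x\<bar> \<le> B" "0 \<le> B"
  shows "B-lipschitz_on S f"
proof (rule lipschitz_onI)
  fix x y assume "x \<in> S" "y \<in> S"
  then show "dist (f x) (f y) \<le> B * dist x y"
    using field_differentiable_bound[OF assms(2) has_field_derivative_at_within[OF assms(1)]] assms(3)
    by (auto simp: dist_real_def)
qed fact

lemma continuous_deriv_imp_lipschitz_on_interval:
  fixes f f' :: "real \<Rightarrow> real"
  assumes "\<And>x. (f has_real_derivative f' x) (at x)" "continuous_on {a..b} f'"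
  shows "\<exists>K. K-lipschitz_on {a..b} f"
proof -
  obtain B where "\<forall>y\<in>f' ` {a..b}. norm y \<le> B"
    using compact_imp_bounded[OF compact_continuous_image[OF assms(2) compact_Icc]]
    by (auto simp: bounded_iff)
  then have "lipschitz_on (max B 0) {a..b} f"
    by (intro bounded_deriv_imp_lipschitz_on[OF assms(1)]) (auto intro: max.coboundedI1)
  then show ?thesis ..
qed

lemma isolated_zero_if_deriv_nonzero:
  fixes f :: "real \<Rightarrow> real"
  assumes "(f has_real_derivative D) (at s)" "D \<noteq> 0" "f s = 0"
  obtains e where "e > 0" "\<And>t. s < t \<Longrightarrow> t < s + e \<Longrightarrow> f t \<noteq> 0"
proof -
  obtain e where "e > 0" "\<And>h. 0 < h \<Longrightarrow> h < e \<Longrightarrow> f (s + h) \<noteq> f s"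
    using DERIV_pos_inc_right[OF assms(1)] DERIV_neg_dec_right[OF assms(1)] assms(2)
    by (metis linorder_neqE_linordered_idom order_less_irrefl)
  moreover have "f t \<noteq> 0" if "s < t" "t < s + e" for t
    using calculation(2)[of "t - s"] that assms(3) by simp
  ultimately show ?thesis
    using that by blast
qed

lemma first_zero_after:
  fixes f :: "real \<Rightarrow> real"
  assumes cont: "continuous_on UNIV f" and "(f has_real_derivative D) (at s)" "D \<noteq> 0" "f s = 0"
    and "t > s" "f t = 0"
  obtains s' where "s' > s" "f s' = 0" "\<And>t. s < t \<Longrightarrow> t < s' \<Longrightarrow> f t \<noteq> 0"
proof -
  obtain e where e: "e > 0" "\<And>t. s < t \<Longrightarrow> t < s + e \<Longrightarrow> f t \<noteq> 0"
    using isolated_zero_if_deriv_nonzero assms(2-4) by blast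
  define Z where "Z = {s + e / 2..} \<inter> f -` {0}"
  have "closed Z"
    unfolding Z_def using cont by (intro closed_Int closed_atLeast closed_vimage) auto
  moreover have "t \<in> Z"
    using e \<open>t > s\<close> \<open>f t = 0\<close> by (force simp: Z_def)
  moreover have "bdd_below Z"
    unfolding Z_def by (rule bdd_belowI[of _ "s + e / 2"]) auto
  ultimately have "Inf Z \<in> Z"
    by (intro closed_contains_Inf) auto
  moreover have "f u \<noteq> 0" if "s < u" "u < Inf Z" for u
  proof
    assume "f u = 0"
    with e that have "u \<in> Z"
      by (cases "u < s + e") (auto simp: Z_def)
    then have "Inf Z \<le> u"
      using \<open>bdd_below Z\<close> by (rule cInf_lower)
    with that show False by simp
  qed
  moreover have "Inf Z > s" "f (Inf Z) = 0"
    using \<open>Inf Z \<in> Z\<close> e(1) by (auto simp: Z_def)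
  ultimately show ?thesis
    using that by blast
qed

lemma deriv_nonpos_at_next_zero:
  fixes f f' :: "real \<Rightarrow> real"
  assumes der: "\<And>t. (f has_real_derivative f' t) (at t)"
    and "a < b" "f a = 0" "f b = 0" and no_zero: "\<And>t. a < t \<Longrightarrow> t < b \<Longrightarrow> f t \<noteq> 0"
    and "f' a > 0"
  shows "f' b \<le> 0"
proof -
  have cont: "continuous_on {u..v} f" for u v
    using der by (meson DERIV_continuous continuous_at_imp_continuous_on)
  obtain e where e: "e > 0" "\<And>h. 0 < h \<Longrightarrow> h < e \<Longrightarrow> f a < f (a + h)"
    using DERIV_pos_inc_right[OF der \<open>f' a > 0\<close>] by blast
  obtain m where m: "0 < m" "m < e" "m < b - a"
    using field_lbound_gt_zero[of e "b - a"] e(1) \<open>a < b\<close> by auto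
  define c where "c = a + m"
  have "a < c" "c < b" "c - a < e"
    using m unfolding c_def by linarith+
  then have c: "a < c" "c < b" "f c > 0"
    using e(2)[of "c - a"] \<open>f a = 0\<close> by auto
  have pos: "f t > 0" if t: "c \<le> t" "t < b" for t
  proof (rule ccontr)
    assume "\<not> f t > 0"
    then obtain u where "c \<le> u" "u \<le> t" "f u = 0"
      using IVT2'[of f t 0 c] c t cont by auto
    with no_zero c t show False by force
  qed
  show ?thesis
  proof (rule ccontr)
    assume "\<not> f' b \<le> 0"
    then obtain d where d: "d > 0" "\<And>h. 0 < h \<Longrightarrow> h < d \<Longrightarrow> f (b - h) < f b"
      using DERIV_pos_inc_left[OF der] by (meson not_le)
    obtain h where "0 < h" "h < d" "h < b - c"
      using field_lbound_gt_zero[of d "b - c"] d(1) c(2) by auto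
    then have "f (b - h) < 0" "f (b - h) > 0"
      using d(2) \<open>f b = 0\<close> pos[of "b - h"] by auto
    then show False by simp
  qed
qed

lemma deriv_signs_at_consecutive_zeros:
  fixes f f' :: "real \<Rightarrow> real"
  assumes der: "\<And>t. (f has_real_derivative f' t) (at t)"
    and "a < b" "f a = 0" "f b = 0" and no_zero: "\<And>t. a < t \<Longrightarrow> t < b \<Longrightarrow> f t \<noteq> 0"
  shows "f' a * f' b \<le> 0"
proof -
  consider "f' a > 0" | "f' a < 0" | "f' a = 0"
    by linarith
  then show ?thesis
  proof cases
    case 1
    then show ?thesis
      using deriv_nonpos_at_next_zero[OF der assms(2-5)] by (simp add: mult_nonneg_nonpos)
  next
    case 2
    have "- f' b \<le> 0"
      using deriv_nonpos_at_next_zero[of "\<lambda>t. - f t" "\<lambda>t. - f' t"] DERIV_minus[OF der] assms(2-5) 2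
      by simp
    then show ?thesis
      using 2 by (simp add: mult_nonpos_nonneg)
  qed simp
qed

text \<open>The composition of the reflections about \<open>a\<close> and \<open>b\<close> is the translation by \<open>2 (b - a)\<close>.\<close>
lemma reflection_closed_set_shift:
  fixes Z :: "real set"
  assumes reflect: "\<And>z y. z \<in> Z \<Longrightarrow> y \<in> Z \<Longrightarrow> 2 * z - y \<in> Z"
    and "a \<in> Z" "b \<in> Z" "s \<in> Z"
  shows "s + of_int j * (2 * (b - a)) \<in> Z"
proof (induction j rule: int_induct[where k = 0])
  case (step1 i)
  have "s + of_int (i + 1) * (2 * (b - a)) = 2 * b - (2 * a - (s + of_int i * (2 * (b - a))))"
    by (simp add: algebra_simps)
  then show ?case
    using reflect[OF \<open>b \<in> Z\<close> reflect[OF \<open>a \<in> Z\<close> step1(2)]] by metis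
next
  case (step2 i)
  have "s + of_int (i - 1) * (2 * (b - a)) = 2 * a - (2 * b - (s + of_int i * (2 * (b - a))))"
    by (simp add: algebra_simps)
  then show ?case
    using reflect[OF \<open>a \<in> Z\<close> reflect[OF \<open>b \<in> Z\<close> step2(2)]] by metis
qed (use \<open>s \<in> Z\<close> in simp)

lemma reflection_closed_set_eq_lattice:
  fixes Z :: "real set"
  assumes reflect: "\<And>z y. z \<in> Z \<Longrightarrow> y \<in> Z \<Longrightarrow> 2 * z - y \<in> Z"
    and "a \<in> Z" "b \<in> Z" "a < b" and gap: "\<And>t. a < t \<Longrightarrow> t < b \<Longrightarrow> t \<notin> Z"
  shows "Z = range (\<lambda>k::int. a + of_int k * (b - a))"
proof -
  have shift: "s + of_int i * (2 * (b - a)) \<in> Z" if "s \<in> Z" for s i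
    by (rule reflection_closed_set_shift) (use reflect \<open>a \<in> Z\<close> \<open>b \<in> Z\<close> that in blast)+
  show ?thesis
  proof (intro antisym subsetI)
    define \<delta> where "\<delta> = b - a"
    fix t assume "t \<in> Z"
    define j where "j = \<lfloor>(t - a) / (2 * \<delta>)\<rfloor>"
    define t' where "t' = t + of_int (- j) * (2 * \<delta>)"
    have "of_int j \<le> (t - a) / (2 * \<delta>)" "(t - a) / (2 * \<delta>) < of_int j + 1"
      unfolding j_def by linarith+
    then have t'_range: "a \<le> t'" "t' < a + 2 * \<delta>"
      using \<open>a < b\<close> by (simp_all add: t'_def \<delta>_def field_simps)
    have "t' \<in> Z"
      using shift[OF \<open>t \<in> Z\<close>, of "- j"] by (simp add: t'_def \<delta>_def)
    have "t' = a \<or> t' = b"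
    proof (rule ccontr)
      assume "\<not> (t' = a \<or> t' = b)"
      then have "a < t' \<and> t' < b \<or> a < 2 * b - t' \<and> 2 * b - t' < b"
        using t'_range by (auto simp: \<delta>_def)
      then show False
        using gap \<open>t' \<in> Z\<close> reflect[OF \<open>b \<in> Z\<close> \<open>t' \<in> Z\<close>] by blast
    qed
    then have "t = a + of_int (2 * j) * \<delta> \<or> t = a + of_int (2 * j + 1) * \<delta>"
      by (auto simp: t'_def \<delta>_def algebra_simps)
    then show "t \<in> range (\<lambda>k::int. a + of_int k * (b - a))"
      unfolding \<delta>_def by blast
  next
    fix t assume "t \<in> range (\<lambda>k::int. a + of_int k * (b - a))"
    then obtain k :: int where k: "t = a + of_int k * (b - a)"
      by auto
    define j where "j = k div 2"
    have "k = 2 * j \<or> k = 2 * j + 1"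
      unfolding j_def by presburger
    then have "t = a + of_int j * (2 * (b - a)) \<or> t = b + of_int j * (2 * (b - a))"
    proof
      assume "k = 2 * j"
      then show ?thesis
        by (simp add: k algebra_simps)
    next
      assume "k = 2 * j + 1"
      then show ?thesis
        by (simp add: k algebra_simps)
    qed
    then show "t \<in> Z"
      using shift \<open>a \<in> Z\<close> \<open>b \<in> Z\<close> by blast
  qed
qed

lemma Inf_periods_eq_twice:
  fixes \<phi> :: "real \<Rightarrow> 'a" and \<delta> a :: real
  assumes "\<delta> > 0" and period: "\<And>t. \<phi> (t + 2 * \<delta>) = \<phi> t"
    and lattice: "\<And>T. T > 0 \<Longrightarrow> (\<forall>t. \<phi> (t + T) = \<phi> t) \<Longrightarrow> \<exists>k::int. T = of_int k * \<delta>"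
    and not_period: "\<phi> (a + \<delta>) \<noteq> \<phi> a"
  shows "Inf {T. T > 0 \<and> (\<forall>t. \<phi> (t + T) = \<phi> t)} = 2 * \<delta>"
proof (rule cInf_eq_minimum)
  show "2 * \<delta> \<in> {T. T > 0 \<and> (\<forall>t. \<phi> (t + T) = \<phi> t)}"
    using \<open>\<delta> > 0\<close> period by simp
next
  fix T assume "T \<in> {T. T > 0 \<and> (\<forall>t. \<phi> (t + T) = \<phi> t)}"
  then have T: "T > 0" "\<forall>t. \<phi> (t + T) = \<phi> t" by auto
  then obtain k :: int where k: "T = of_int k * \<delta>"
    using lattice by blast
  then have "k > 0"
    using T(1) \<open>\<delta> > 0\<close> by (simp add: zero_less_mult_iff)
  moreover have "k \<noteq> 1"
    using T(2) not_period k by auto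
  ultimately have "2 * \<delta> \<le> of_int k * \<delta>"
    using \<open>\<delta> > 0\<close> by (intro mult_right_mono) auto
  then show "2 * \<delta> \<le> T"
    by (simp add: k)
qed

lemma card_lattice_points_between:
  fixes s \<delta> t1 t2 :: real
  assumes "\<delta> > 0" "t1 < t2" and "t2 \<notin> range (\<lambda>k::int. s + of_int k * \<delta>)"
  shows "finite {t. t1 < t \<and> t < t2 \<and> t \<in> range (\<lambda>k::int. s + of_int k * \<delta>)} \<and>
    (int (card {t. t1 < t \<and> t < t2 \<and> t \<in> range (\<lambda>k::int. s + of_int k * \<delta>)}) = \<lfloor>(t2 - t1) / \<delta>\<rfloor> \<or>
     int (card {t. t1 < t \<and> t < t2 \<and> t \<in> range (\<lambda>k::int. s + of_int k * \<delta>)}) = \<lfloor>(t2 - t1) / \<delta>\<rfloor> + 1)"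
proof -
  define f where "f k = s + of_int k * \<delta>" for k :: int
  define a b where "a = (t1 - s) / \<delta>" and "b = (t2 - s) / \<delta>"
  have between_iff: "t1 < f k \<and> f k < t2 \<longleftrightarrow> k \<in> {\<lfloor>a\<rfloor> + 1 .. \<lfloor>b\<rfloor>}" for k
  proof -
    have "t1 < f k \<longleftrightarrow> a < of_int k" "f k < t2 \<longleftrightarrow> of_int k < b" "f k = t2 \<longleftrightarrow> of_int k = b"
      using \<open>\<delta> > 0\<close> by (auto simp: a_def b_def f_def field_simps)
    moreover have "f k \<noteq> t2"
      using assms(3) by (auto simp: f_def)
    moreover have "\<lfloor>a\<rfloor> + 1 \<le> k \<longleftrightarrow> a < of_int k"
      using floor_less_iff[of a k] by linarith
    ultimately show ?thesis
      by (auto simp: le_floor_iff)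
  qed
  have "{t. t1 < t \<and> t < t2 \<and> t \<in> range f} = f ` {\<lfloor>a\<rfloor> + 1 .. \<lfloor>b\<rfloor>}"
    using between_iff by blast
  moreover have "inj f"
    using \<open>\<delta> > 0\<close> by (auto simp: f_def intro!: injI)
  moreover have "\<lfloor>a\<rfloor> \<le> \<lfloor>b\<rfloor>"
    using assms(1,2) by (intro floor_mono) (simp add: a_def b_def divide_right_mono)
  moreover have "\<lfloor>b\<rfloor> = \<lfloor>a\<rfloor> + \<lfloor>(t2 - t1) / \<delta>\<rfloor> \<or> \<lfloor>b\<rfloor> = \<lfloor>a\<rfloor> + \<lfloor>(t2 - t1) / \<delta>\<rfloor> + 1"
  proof -
    have b: "b = a + (t2 - t1) / \<delta>"
      by (simp add: a_def b_def diff_divide_distrib)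
    show ?thesis
      unfolding b floor_add by simp
  qed
  ultimately show ?thesis
    unfolding f_def by (auto simp: card_image inj_on_subset)
qed

section \<open>Symmetric oscillators\<close>

lemma solves_newton_uminus:
  assumes "solves_newton F x p" and odd: "\<And>y. F (- y) = - F y"
  shows "solves_newton F (\<lambda>t. - x t) (\<lambda>t. - p t)"
  using assms(1) unfolding solves_newton_def by (auto intro!: derivative_eq_intros simp: odd)

lemma odd_oscillator_returns_to_zero:
  assumes sol: "solves_newton F x p"
    and energy: "\<And>t. (p t)\<^sup>2 / 2 + V (x t) = E"
    and bounded: "\<And>t. \<bar>x t\<bar> \<le> M" "\<And>t. \<bar>p t\<bar> \<le> P"
    and lip: "K-lipschitz_on {-M..M} F" and odd: "\<And>y. F (- y) = - F y"
    and cont: "\<And>y. isCont F y" "\<And>y. isCont V y"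
    and regular: "\<And>y. V y = E \<Longrightarrow> F y \<noteq> 0"
    and "x s0 = 0"
  shows "p s0 \<noteq> 0" and "\<exists>s1>s0. x s1 = 0"
proof -
  show "p s0 \<noteq> 0"
    using energy[of s0] regular[of 0] odd[of 0] \<open>x s0 = 0\<close> by auto
  then consider "p s0 > 0" | "- p s0 > 0"
    by linarith
  then obtain r where "r > s0" "p r = 0"
  proof cases
    case 1
    show ?thesis
      using solves_newton_bounded_turns[OF sol energy _ _ cont regular 1] bounded that
      by (meson abs_le_D1)
  next
    case 2
    have "\<exists>r>s0. - p r = 0"
    proof (rule solves_newton_bounded_turns[OF solves_newton_uminus[OF sol odd], of "\<lambda>y. V (- y)" E M P])
      show "isCont (\<lambda>y. V (- y)) y" for y
        using isCont_o2[of y uminus V] cont(2) by simp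
      show "F y \<noteq> 0" if "V (- y) = E" for y
        using regular[OF that] odd[of y] by simp
    qed (use energy bounded cont regular odd 2 in \<open>auto intro: abs_le_D2\<close>)
    then show ?thesis
      using that by auto
  qed
  moreover have "range x \<subseteq> {-M..M}"
    using bounded(1) by (auto simp: abs_le_iff minus_le_iff)
  ultimately show "\<exists>s1>s0. x s1 = 0"
    using solves_newton_turning_point_symmetry[OF sol lip, of r s0] \<open>x s0 = 0\<close>
    by (intro exI[of _ "2 * r - s0"]) auto
qed

lemma odd_oscillator_zeros_and_period:
  assumes sol: "solves_newton F x p"
    and energy: "\<And>t. (p t)\<^sup>2 / 2 + V (x t) = E"
    and bounded: "\<And>t. \<bar>x t\<bar> \<le> M" "\<And>t. \<bar>p t\<bar> \<le> P"
    and lip: "K-lipschitz_on {-M..M} F" and odd: "\<And>y. F (- y) = - F y"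
    and cont: "\<And>y. isCont F y" "\<And>y. isCont V y"
    and regular: "\<And>y. V y = E \<Longrightarrow> F y \<noteq> 0"
    and "x s0 = 0"
  shows "\<exists>\<delta>>0. {t. x t = 0} = range (\<lambda>k::int. s0 + of_int k * \<delta>) \<and> Tlam x p = 2 * \<delta>"
proof -
  note returns = odd_oscillator_returns_to_zero[OF assms]
  have range_x: "range x \<subseteq> {-M..M}"
    using bounded(1) by (auto simp: abs_le_iff minus_le_iff)
  have center: "x (2 * z - t) = - x t \<and> p (2 * z - t) = p t" if "x z = 0" for z t
    using solves_newton_center_symmetry[OF sol lip range_x, of 0 z t] odd that by auto
  obtain s1 where s1: "s1 > s0" "x s1 = 0" "\<And>t. s0 < t \<Longrightarrow> t < s1 \<Longrightarrow> x t \<noteq> 0"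
    using first_zero_after[OF solves_newton_continuous(1)[OF sol] solves_newtonD(1)[OF sol]
        returns(1) \<open>x s0 = 0\<close>] returns(2) by blast
  define \<delta> where "\<delta> = s1 - s0"
  have \<delta>: "\<delta> > 0"
    using s1(1) by (simp add: \<delta>_def)
  have zeros: "{t. x t = 0} = range (\<lambda>k::int. s0 + of_int k * \<delta>)"
    unfolding \<delta>_def
    by (rule reflection_closed_set_eq_lattice) (use center \<open>x s0 = 0\<close> s1 in auto)
  have "Inf {T. T > 0 \<and> (\<forall>t. (x (t + T), p (t + T)) = (x t, p t))} = 2 * \<delta>"
  proof (rule Inf_periods_eq_twice[OF \<delta>])
    show "(x (t + 2 * \<delta>), p (t + 2 * \<delta>)) = (x t, p t)" for t
      using center[OF s1(2), of "2 * s0 - t"] center[OF \<open>x s0 = 0\<close>, of t]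
      by (simp add: \<delta>_def algebra_simps)
    show "\<exists>k::int. T = of_int k * \<delta>" if "\<forall>t. (x (t + T), p (t + T)) = (x t, p t)" for T
    proof -
      have "s0 + T \<in> {t. x t = 0}"
        using that \<open>x s0 = 0\<close> by auto
      then show ?thesis
        unfolding zeros by (auto simp: algebra_simps)
    qed
    have "p s0 * p s1 \<le> 0"
      using deriv_signs_at_consecutive_zeros[OF solves_newtonD(1)[OF sol] s1(1) \<open>x s0 = 0\<close> s1(2-3)] .
    then show "(x (s0 + \<delta>), p (s0 + \<delta>)) \<noteq> (x s0, p s0)"
      using returns(1) by (auto simp: \<delta>_def mult_le_0_iff)
  qed
  then show ?thesis
    using \<delta> zeros by (auto simp: Tlam_def)
qed

lemma cyl_eq_iff: "cyl (a, p) = cyl (b, q) \<longleftrightarrow> cos a = cos b \<and> sin a = sin b \<and> p = q"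
  by (simp add: cyl_def)

lemma cyl_add_multiple_2pi: "cyl (v + 2 * pi * of_int n, q) = cyl (v, q)"
  using sin_cos_eq_iff[of "v + 2 * pi * of_int n" v] by (auto simp: cyl_eq_iff)

lemma cos_reflect_at_cos_zero:
  fixes c y :: real
  assumes "cos c = 0"
  shows "cos (2 * c - y) = - cos y" and "sin (2 * c - y) = sin y"
proof -
  have "cos (2 * c) = -1" "sin (2 * c) = 0"
    using assms by (simp_all add: cos_double_cos sin_double)
  then show "cos (2 * c - y) = - cos y" "sin (2 * c - y) = sin y"
    by (simp_all add: cos_diff sin_diff)
qed

lemma cos_symmetric_oscillator_period:
  assumes sol: "solves_newton G v p" and lip: "K-lipschitz_on UNIV G"
    and sym: "\<And>c y. cos c = 0 \<Longrightarrow> G (2 * c - y) = - G y"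
    and "t1 < t2" "cos (v t1) = 0" "cos (v t2) = 0"
    and between: "\<And>t. t1 < t \<Longrightarrow> t < t2 \<Longrightarrow> cos (v t) \<noteq> 0"
    and "p t1 \<noteq> 0"
  shows "Tnu v p = 2 * (t2 - t1)"
proof -
  have center: "v (2 * z - t) = 2 * v z - v t \<and> p (2 * z - t) = p t" if "cos (v z) = 0" for z t
    using solves_newton_center_symmetry[OF sol lip, of "v z" z t] sym[OF that] by auto
  have zeros: "{t. cos (v t) = 0} = range (\<lambda>k::int. t1 + of_int k * (t2 - t1))"
    by (rule reflection_closed_set_eq_lattice)
      (use center cos_reflect_at_cos_zero assms(4-7) in auto)
  obtain n1 n2 :: int where "v t1 = of_int n1 * pi + pi / 2" "v t2 = of_int n2 * pi + pi / 2"
    using assms(5,6) cos_zero_iff_int2 by metis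
  then have v_diff: "2 * (v t2 - v t1) = 2 * pi * of_int (n2 - n1)"
    by (simp add: algebra_simps)
  define \<delta> where "\<delta> = t2 - t1"
  have \<delta>: "\<delta> > 0"
    using \<open>t1 < t2\<close> by (simp add: \<delta>_def)
  have "Inf {T. T > 0 \<and> (\<forall>t. cyl (v (t + T), p (t + T)) = cyl (v t, p t))} = 2 * \<delta>"
  proof (rule Inf_periods_eq_twice[OF \<delta>])
    fix t
    have shift: "v (t + 2 * \<delta>) = v t + 2 * (v t2 - v t1)" "p (t + 2 * \<delta>) = p t"
      using center[OF assms(6), of "2 * t1 - t"] center[OF assms(5), of t]
      by (simp_all add: \<delta>_def algebra_simps)
    show "cyl (v (t + 2 * \<delta>), p (t + 2 * \<delta>)) = cyl (v t, p t)"
      unfolding shift v_diff by (rule cyl_add_multiple_2pi)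
  next
    fix T assume "\<forall>t. cyl (v (t + T), p (t + T)) = cyl (v t, p t)"
    then have "t1 + T \<in> {t. cos (v t) = 0}"
      using assms(5) by (simp add: cyl_eq_iff)
    then show "\<exists>k::int. T = of_int k * \<delta>"
      unfolding zeros \<delta>_def by (auto simp: algebra_simps)
  next
    \<comment> \<open>Half a period later the motion is back at a zero of \<open>cos\<close>, but moving the other way.\<close>
    have "((\<lambda>t. cos (v t)) has_real_derivative - sin (v t) * p t) (at t)" for t
      by (rule derivative_eq_intros solves_newtonD(1)[OF sol] refl)+
    from deriv_signs_at_consecutive_zeros[OF this assms(4-7)]
    have "(- sin (v t1) * p t1) * (- sin (v t2) * p t2) \<le> 0" .
    moreover have "sin (v t1) \<noteq> 0"
      using assms(5) sin_cos_squared_add[of "v t1"] by auto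
    then have "- sin (v t1) * p t1 \<noteq> 0"
      using \<open>p t1 \<noteq> 0\<close> by simp
    then have "0 < (- sin (v t1) * p t1) * (- sin (v t1) * p t1)"
      by (metis not_real_square_gt_zero)
    ultimately show "cyl (v (t1 + \<delta>), p (t1 + \<delta>)) \<noteq> cyl (v t1, p t1)"
      unfolding \<delta>_def cyl_eq_iff by force
  qed
  then show ?thesis
    by (simp add: Tnu_def \<delta>_def)
qed

lemma regular_level_not_equilibrium:
  fixes V F :: "real \<Rightarrow> real"
  assumes reg: "regular_value (\<lambda>(x, p). p\<^sup>2 / 2 + V x) c"
    and dV: "\<And>y. (V has_real_derivative - F y) (at y)"
    and "p\<^sup>2 / 2 + V x = c"
  shows "p \<noteq> 0 \<or> F x \<noteq> 0"
proof -
  obtain D where D: "((\<lambda>(x, p). p\<^sup>2 / 2 + V x) has_derivative D) (at (x, p))" "D \<noteq> (\<lambda>_. 0)"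
    using reg assms(3) unfolding regular_value_def by auto
  have "(fst has_derivative fst) (at (x, p))"
    by (rule bounded_linear.has_derivative[OF bounded_linear_fst has_derivative_ident])
  from has_derivative_compose[OF this has_field_derivative_imp_has_derivative[OF dV[of "fst (x, p)"]]]
  have "((\<lambda>z. V (fst z)) has_derivative (\<lambda>w. - F x * fst w)) (at (x, p))"
    by simp
  then have "((\<lambda>(x, p). p\<^sup>2 / 2 + V x) has_derivative (\<lambda>w. p * snd w - F x * fst w)) (at (x, p))"
    unfolding case_prod_unfold
    by (auto intro!: derivative_eq_intros simp: fun_eq_iff)
  then have "D = (\<lambda>w. p * snd w - F x * fst w)"
    using has_derivative_unique[OF D(1)] by blast
  then show ?thesis
    using D(2) by auto
qed

section \<open>The regularized two-center problem\<close>

definition lambda_potential :: "real \<Rightarrow> real \<Rightarrow> real \<Rightarrow> real \<Rightarrow> real \<Rightarrow> real" where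
  "lambda_potential d m1 m2 h x = - d * (m1 + m2) * cosh x - h * d\<^sup>2 * (cosh x)\<^sup>2"

definition lambda_force :: "real \<Rightarrow> real \<Rightarrow> real \<Rightarrow> real \<Rightarrow> real \<Rightarrow> real" where
  "lambda_force d m1 m2 h x = d * (m1 + m2) * sinh x + 2 * h * d\<^sup>2 * cosh x * sinh x"

definition nu_potential :: "real \<Rightarrow> real \<Rightarrow> real \<Rightarrow> real \<Rightarrow> real \<Rightarrow> real" where
  "nu_potential d m1 m2 h v = d * (m1 - m2) * sin v + h * d\<^sup>2 * (sin v)\<^sup>2"

definition nu_force :: "real \<Rightarrow> real \<Rightarrow> real \<Rightarrow> real \<Rightarrow> real \<Rightarrow> real" where
  "nu_force d m1 m2 h v = - (d * (m1 - m2) * cos v + 2 * h * d\<^sup>2 * sin v * cos v)"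

lemma Hlam_eq: "Hlam d m1 m2 h = (\<lambda>(x, p). p\<^sup>2 / 2 + lambda_potential d m1 m2 h x)"
  by (auto simp: fun_eq_iff Hlam_def lambda_potential_def)

lemma Hnu_eq: "Hnu d m1 m2 h = (\<lambda>(v, p). p\<^sup>2 / 2 + nu_potential d m1 m2 h v)"
  by (auto simp: fun_eq_iff Hnu_def nu_potential_def)

lemma lambda_potential_deriv:
  "(lambda_potential d m1 m2 h has_real_derivative - lambda_force d m1 m2 h x) (at x)"
  unfolding lambda_potential_def[abs_def] lambda_force_def
  by (auto intro!: derivative_eq_intros simp: algebra_simps)

lemma nu_potential_deriv:
  "(nu_potential d m1 m2 h has_real_derivative - nu_force d m1 m2 h v) (at v)"
  unfolding nu_potential_def[abs_def] nu_force_def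
  by (auto intro!: derivative_eq_intros simp: algebra_simps)

lemma regularized_orbit_iff:
  "regularized_orbit d m1 m2 h lam plam nu pnu \<longleftrightarrow>
     solves_newton (lambda_force d m1 m2 h) lam plam \<and> solves_newton (nu_force d m1 m2 h) nu pnu"
  by (auto simp: regularized_orbit_def solves_newton_def lambda_force_def nu_force_def)

lemma lambda_force_odd: "lambda_force d m1 m2 h (- x) = - lambda_force d m1 m2 h x"
  by (simp add: lambda_force_def)

lemma nu_force_reflect:
  assumes "cos c = 0"
  shows "nu_force d m1 m2 h (2 * c - v) = - nu_force d m1 m2 h v"
  using cos_reflect_at_cos_zero[OF assms] by (simp add: nu_force_def)

lemma nu_force_zero_if_cos_zero: "cos v = 0 \<Longrightarrow> nu_force d m1 m2 h v = 0"
  by (simp add: nu_force_def)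

lemma lambda_force_lipschitz_on: "\<exists>K. K-lipschitz_on {-M..M} (lambda_force d m1 m2 h)"
proof (rule continuous_deriv_imp_lipschitz_on_interval)
  show "(lambda_force d m1 m2 h has_real_derivative
      d * (m1 + m2) * cosh x + 2 * h * d\<^sup>2 * ((sinh x)\<^sup>2 + (cosh x)\<^sup>2)) (at x)" for x
    unfolding lambda_force_def[abs_def]
    by (auto intro!: derivative_eq_intros simp: power2_eq_square algebra_simps)
qed (intro continuous_intros)

lemma nu_force_lipschitz:
  "(\<bar>d * (m1 - m2)\<bar> + 2 * \<bar>h * d\<^sup>2\<bar>)-lipschitz_on UNIV (nu_force d m1 m2 h)"
proof (rule bounded_deriv_imp_lipschitz_on)
  show "(nu_force d m1 m2 h has_real_derivative d * (m1 - m2) * sin v - 2 * h * d\<^sup>2 * cos (2 * v)) (at v)"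
    for v
    unfolding nu_force_def[abs_def] cos_double
    by (auto intro!: derivative_eq_intros simp: power2_eq_square algebra_simps)
  show "\<bar>d * (m1 - m2) * sin v - 2 * h * d\<^sup>2 * cos (2 * v)\<bar> \<le> \<bar>d * (m1 - m2)\<bar> + 2 * \<bar>h * d\<^sup>2\<bar>"
    for v
  proof -
    have "\<bar>d * (m1 - m2) * sin v\<bar> \<le> \<bar>d * (m1 - m2)\<bar>"
      by (simp add: abs_mult mult_left_le abs_sin_le_one)
    moreover have "\<bar>2 * h * d\<^sup>2\<bar> * \<bar>cos (2 * v)\<bar> \<le> \<bar>2 * h * d\<^sup>2\<bar>"
      by (simp add: mult_left_le abs_cos_le_one)
    then have "\<bar>2 * h * d\<^sup>2 * cos (2 * v)\<bar> \<le> 2 * \<bar>h * d\<^sup>2\<bar>"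
      by (simp add: abs_mult)
    ultimately show ?thesis
      by (meson abs_triangle_ineq4 add_mono order_trans)
  qed
qed simp_all

lemma lambda_motion_bounded:
  fixes lam plam :: "real \<Rightarrow> real"
  assumes "d > 0" "m1 > 0" "m2 > 0" "h < 0"
    and energy: "\<And>t. (plam t)\<^sup>2 / 2 + lambda_potential d m1 m2 h (lam t) = E"
  obtains M P where "\<And>t. \<bar>lam t\<bar> \<le> M" "\<And>t. \<bar>plam t\<bar> \<le> P"
proof -
  define A B where "A = d * (m1 + m2)" and "B = - h * d\<^sup>2"
  have "A > 0" "B > 0"
    using assms(1-4) by (simp_all add: A_def B_def mult_neg_pos)
  have kinetic: "(plam t)\<^sup>2 / 2 = E + A * cosh (lam t) - B * (cosh (lam t))\<^sup>2" for t
    using energy[of t] by (simp add: lambda_potential_def A_def B_def algebra_simps)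
  define C where "C = (\<bar>E\<bar> + A) / B"
  have cosh_le: "cosh (lam t) \<le> C" for t
  proof -
    define c where "c = cosh (lam t)"
    have "c \<ge> 1"
      by (simp add: c_def cosh_real_ge_1)
    have "0 \<le> (plam t)\<^sup>2 / 2"
      by simp
    then have "B * c * c \<le> E + A * c"
      unfolding kinetic c_def by (simp add: power2_eq_square)
    also have "\<dots> \<le> (\<bar>E\<bar> + A) * c"
      using \<open>c \<ge> 1\<close> mult_left_mono[OF \<open>c \<ge> 1\<close>, of "\<bar>E\<bar>"] by (simp add: algebra_simps)
    finally have "B * c \<le> \<bar>E\<bar> + A"
      using \<open>c \<ge> 1\<close> by simp
    then show ?thesis
      using \<open>B > 0\<close> by (simp add: C_def c_def field_simps)
  qed
  have "C \<ge> 1"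
    using cosh_le[of 0] cosh_real_ge_1[of "lam 0"] by linarith
  have "\<bar>lam t\<bar> \<le> arcosh C" for t
    using cosh_le[of t] \<open>C \<ge> 1\<close> cosh_real_nonneg_le_iff[of "\<bar>lam t\<bar>" "arcosh C"] by simp
  moreover have "\<bar>plam t\<bar> \<le> sqrt (2 * (\<bar>E\<bar> + A * C))" for t
  proof -
    have "A * cosh (lam t) \<le> A * C" "0 \<le> B * (cosh (lam t))\<^sup>2"
      using mult_left_mono[OF cosh_le[of t], of A] \<open>A > 0\<close> \<open>B > 0\<close> by simp_all
    then have "(plam t)\<^sup>2 \<le> 2 * (\<bar>E\<bar> + A * C)"
      using kinetic[of t] abs_ge_self[of E] by argo
    then show ?thesis
      using real_sqrt_le_mono by fastforce
  qed
  ultimately show ?thesis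
    using that by blast
qed

lemma syzygy_eq_3_iff: "syzygy lam nu t = Some 3 \<longleftrightarrow> lam t = 0 \<and> cos (nu t) \<noteq> 0"
  by (simp add: syzygy_def)

lemma syzygy_in_12_iff:
  "syzygy lam nu t \<in> {Some 1, Some 2} \<longleftrightarrow> lam t \<noteq> 0 \<and> cos (nu t) = 0"
proof -
  have "(cos (nu t))\<^sup>2 = 1 - (sin (nu t))\<^sup>2"
    by (rule cos_squared_eq)
  then have "cos (nu t) = 0 \<longleftrightarrow> (sin (nu t))\<^sup>2 = 1"
    by auto
  then have "cos (nu t) = 0 \<longleftrightarrow> sin (nu t) = 1 \<or> sin (nu t) = -1"
    by (simp add: power2_eq_1_iff)
  then show ?thesis
    by (auto simp: syzygy_def)
qed

lemma regularized_orbit_energy_levels: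
  assumes orbit: "regularized_orbit d m1 m2 h lam plam nu pnu"
    and torus: "regular_torus d m1 m2 h g (lam 0, plam 0) (nu 0, pnu 0)"
  shows "Hlam d m1 m2 h (lam t, plam t) = - g" and "Hnu d m1 m2 h (nu t, pnu t) = g"
proof -
  have sol_lam: "solves_newton (lambda_force d m1 m2 h) lam plam"
    and sol_nu: "solves_newton (nu_force d m1 m2 h) nu pnu"
    using orbit by (simp_all add: regularized_orbit_iff)
  show "Hlam d m1 m2 h (lam t, plam t) = - g"
    using solves_newton_energy_conserved[OF sol_lam lambda_potential_deriv, of t 0] torus
    by (simp add: Hlam_eq regular_torus_def)
  show "Hnu d m1 m2 h (nu t, pnu t) = g"
    using solves_newton_energy_conserved[OF sol_nu nu_potential_deriv, of t 0] torus
    by (simp add: Hnu_eq regular_torus_def)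
qed

lemma lambda_zeros_and_period:
  assumes "d > 0" "m1 > 0" "m2 > 0" "h < 0"
    and sol: "solves_newton (lambda_force d m1 m2 h) lam plam"
    and level: "\<And>t. Hlam d m1 m2 h (lam t, plam t) = c"
    and regular: "regular_value (Hlam d m1 m2 h) c"
    and "lam s0 = 0"
  shows "\<exists>\<delta>>0. {t. lam t = 0} = range (\<lambda>k::int. s0 + of_int k * \<delta>) \<and> Tlam lam plam = 2 * \<delta>"
proof -
  have energy: "\<And>t. (plam t)\<^sup>2 / 2 + lambda_potential d m1 m2 h (lam t) = c"
    using level by (simp add: Hlam_eq)
  obtain M P where bounded: "\<And>t. \<bar>lam t\<bar> \<le> M" "\<And>t. \<bar>plam t\<bar> \<le> P"
    using lambda_motion_bounded[OF assms(1-4) energy] by metis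
  obtain K where lip: "K-lipschitz_on {-M..M} (lambda_force d m1 m2 h)"
    using lambda_force_lipschitz_on by blast
  have "regular_value (\<lambda>(x, p). p\<^sup>2 / 2 + lambda_potential d m1 m2 h x) c"
    using regular by (simp add: Hlam_eq)
  from regular_level_not_equilibrium[OF this lambda_potential_deriv, of 0]
  have "lambda_force d m1 m2 h y \<noteq> 0" if "lambda_potential d m1 m2 h y = c" for y
    using that by simp
  moreover have "isCont (lambda_force d m1 m2 h) y" for y
    unfolding lambda_force_def[abs_def] by (intro continuous_intros)
  moreover note DERIV_isCont[OF lambda_potential_deriv]
  ultimately show ?thesis
    by (intro odd_oscillator_zeros_and_period[OF sol energy bounded lip lambda_force_odd _ _ _ \<open>lam s0 = 0\<close>])
      simp_all
qed

lemma nu_period_between_cos_zeros: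
  assumes sol: "solves_newton (nu_force d m1 m2 h) nu pnu"
    and level: "\<And>t. Hnu d m1 m2 h (nu t, pnu t) = c"
    and regular: "regular_value (Hnu d m1 m2 h) c"
    and "t1 < t2" "cos (nu t1) = 0" "cos (nu t2) = 0"
    and between: "\<And>t. t1 < t \<Longrightarrow> t < t2 \<Longrightarrow> cos (nu t) \<noteq> 0"
  shows "Tnu nu pnu = 2 * (t2 - t1)"
proof (rule cos_symmetric_oscillator_period[OF sol nu_force_lipschitz nu_force_reflect assms(4-6) between])
  have "regular_value (\<lambda>(v, p). p\<^sup>2 / 2 + nu_potential d m1 m2 h v) c"
    using regular by (simp add: Hnu_eq)
  from regular_level_not_equilibrium[OF this nu_potential_deriv]
  have "pnu t1 \<noteq> 0 \<or> nu_force d m1 m2 h (nu t1) \<noteq> 0"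
    using level[of t1] by (simp add: Hnu_eq)
  then show "pnu t1 \<noteq> 0"
    using nu_force_zero_if_cos_zero[OF \<open>cos (nu t1) = 0\<close>] by simp
qed

theorem corollary1:
  fixes d m1 m2 h g :: real and lam plam nu pnu :: "real \<Rightarrow> real"
    and t1 t2 :: real
  assumes "d > 0" and "m1 > 0" and "m2 > 0" and "h < 0"
    and orbit: "regularized_orbit d m1 m2 h lam plam nu pnu"
    and torus: "regular_torus d m1 m2 h g (lam 0, plam 0) (nu 0, pnu 0)"
    and ttype: "torus_type_L d m1 m2 h g (lam 0, plam 0) (nu 0, pnu 0) \<or>
              torus_type_S d m1 m2 h g (lam 0, plam 0) (nu 0, pnu 0)"
    and nc: "non_collision lam nu"
    and "t1 < t2"
    and "syzygy lam nu t1 \<in> {Some 1, Some 2}"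
    and "syzygy lam nu t2 \<in> {Some 1, Some 2}"
    and "\<forall>t. t1 < t \<and> t < t2 \<longrightarrow> syzygy lam nu t \<notin> {Some 1, Some 2}"
    and "{t. t1 < t \<and> t < t2 \<and> syzygy lam nu t = Some 3} \<noteq> {}"
  shows "finite {t. t1 < t \<and> t < t2 \<and> syzygy lam nu t = Some 3} \<and>
         (int (card {t. t1 < t \<and> t < t2 \<and> syzygy lam nu t = Some 3})
            = \<lfloor>rotation_number lam plam nu pnu\<rfloor> \<or>
          int (card {t. t1 < t \<and> t < t2 \<and> syzygy lam nu t = Some 3})
            = \<lfloor>rotation_number lam plam nu pnu\<rfloor> + 1)"
proof -
  have sol_lam: "solves_newton (lambda_force d m1 m2 h) lam plam"
    and sol_nu: "solves_newton (nu_force d m1 m2 h) nu pnu"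
    using orbit by (simp_all add: regularized_orbit_iff)
  note lam_level = regularized_orbit_energy_levels(1)[OF orbit torus]
    and nu_level = regularized_orbit_energy_levels(2)[OF orbit torus]
  have reg_lam: "regular_value (Hlam d m1 m2 h) (- g)" and reg_nu: "regular_value (Hnu d m1 m2 h) g"
    using torus by (simp_all add: regular_torus_def)
  have cos_zero_iff: "cos (nu t) = 0 \<longleftrightarrow> syzygy lam nu t \<in> {Some 1, Some 2}" for t
    unfolding syzygy_in_12_iff using nc by (auto simp: non_collision_def)
  have syzygy_3: "{t. t1 < t \<and> t < t2 \<and> syzygy lam nu t = Some 3} = {t. t1 < t \<and> t < t2 \<and> lam t = 0}"
    using assms(12) cos_zero_iff by (auto simp: syzygy_eq_3_iff)
  obtain s0 where "lam s0 = 0"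
    using assms(13) unfolding syzygy_3 by blast
  then obtain \<delta> where \<delta>: "\<delta> > 0" "{t. lam t = 0} = range (\<lambda>k::int. s0 + of_int k * \<delta>)"
      "Tlam lam plam = 2 * \<delta>"
    using lambda_zeros_and_period[OF assms(1-4) sol_lam lam_level reg_lam] by blast
  have "Tnu nu pnu = 2 * (t2 - t1)"
    using nu_period_between_cos_zeros[OF sol_nu nu_level reg_nu \<open>t1 < t2\<close>] cos_zero_iff assms(10-12)
    by blast
  then have rotation: "rotation_number lam plam nu pnu = (t2 - t1) / \<delta>"
    using \<delta>(1,3) by (simp add: rotation_number_def field_simps)
  have "t2 \<notin> range (\<lambda>k::int. s0 + of_int k * \<delta>)"
    using assms(11) unfolding syzygy_in_12_iff \<delta>(2)[symmetric] by simp
  from card_lattice_points_between[OF \<delta>(1) \<open>t1 < t2\<close> this]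
  show ?thesis
    unfolding syzygy_3 rotation \<delta>(2)[symmetric] by simp
qed

end
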